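(* Let $k$ be an $\mathbf{F}_p$-algebra, $m\in\mathbf{N}\cup\{\infty\}$, and $A:=k[[\pi]]/(\pi^{m+1})$. The function $\phi:A\to\operatorname{HS}^m(k)[[\pi]]/(\pi^{m+1})$ defined by $$\phi\Big(\sum_{i=0}^ma_i\pi^i\Big):=\sum_{n=0}^m\sum_{i=0}^nd^{[n-i]}a_i\,\pi^n\qquad(a_i\in k)$$ is a ring homomorphism.
   Context: For a ring $R$ and $m\in\mathbf{N}\cup\{\infty\}$, $\operatorname{HS}^m(R):=\mathbf{Z}[d^{[n]}a\mid a\in R,0\le n\le m]/\sim$, where $\sim$ is generated by the relations $d^{[n]}(a+b)=d^{[n]}a+d^{[n]}b$, $d^{[n]}(ab)=\sum_{i+j=n}d^{[i]}a\,d^{[j]}b$, and $d^{[0]}1=1$. Here $\pi^{\infty+1}:=0$, so for $m=\infty$ the rings are ordinary power series rings. *)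

theory Defs
  imports "HOL-Algebra.Algebra" "HOL-Library.Poly_Mapping" "HOL-Library.Extended_Nat" "HOL-Computational_Algebra.Primes"
begin

definition tcring :: "('a::comm_ring_1) ring" where
  "tcring = \<lparr>carrier = UNIV, monoid.mult = (*), one = 1, ring.zero = 0, ring.add = (+)\<rparr>"

text \<open>Truncated power series R[[pi]]/(pi^(m+1)), m an extended natural
  (m = \<infinity> gives ordinary power series).  Elements are coefficient sequences
  which vanish beyond index m.\<close>
definition trunc_ps :: "('a, 'b) ring_scheme \<Rightarrow> enat \<Rightarrow> (nat \<Rightarrow> 'a) ring" where
  "trunc_ps R m =
    \<lparr>carrier = {f. (\<forall>n. f n \<in> carrier R) \<and> (\<forall>n. \<not> enat n \<le> m \<longrightarrow> f n = \<zero>\<^bsub>R\<^esub>)},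
     monoid.mult = (\<lambda>f g n. if enat n \<le> m
                      then (\<Oplus>\<^bsub>R\<^esub> i\<in>{..n}. f i \<otimes>\<^bsub>R\<^esub> g (n - i)) else \<zero>\<^bsub>R\<^esub>),
     one = (\<lambda>n. if n = 0 then \<one>\<^bsub>R\<^esub> else \<zero>\<^bsub>R\<^esub>),
     ring.zero = (\<lambda>n. \<zero>\<^bsub>R\<^esub>),
     ring.add = (\<lambda>f g n. if enat n \<le> m then f n \<oplus>\<^bsub>R\<^esub> g n else \<zero>\<^bsub>R\<^esub>)\<rparr>"

text \<open>Polynomials over Z in the variables d^[n] a (a \<in> k, n \<in> N); a variable is
  a pair (a, n), a monomial a finitely supported exponent map.\<close>
type_synonym 'k hs_poly = "(('k \<times> nat) \<Rightarrow>\<^sub>0 nat) \<Rightarrow>\<^sub>0 int"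

definition hsvar :: "nat \<Rightarrow> 'k \<Rightarrow> 'k hs_poly" where
  "hsvar n a = Poly_Mapping.single (Poly_Mapping.single (a, n) 1) 1"

definition hs_poly_ring :: "enat \<Rightarrow> 'k hs_poly ring" where
  "hs_poly_ring m =
    \<lparr>carrier = {p. \<forall>mon \<in> Poly_Mapping.keys p. \<forall>v \<in> Poly_Mapping.keys mon. enat (snd v) \<le> m},
     monoid.mult = (*), one = 1, ring.zero = 0, ring.add = (+)\<rparr>"

definition hs_rel :: "enat \<Rightarrow> ('k::comm_ring_1) hs_poly set" where
  "hs_rel m =
     {hsvar n (a + b) - hsvar n a - hsvar n b | a b n. enat n \<le> m}
   \<union> {hsvar n (a * b) - (\<Sum>i\<le>n. hsvar i a * hsvar (n - i) b) | a b n. enat n \<le> m}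
   \<union> {hsvar 0 1 - 1}"

definition HS :: "enat \<Rightarrow> ('k::comm_ring_1) hs_poly set ring" where
  "HS m = hs_poly_ring m Quot genideal (hs_poly_ring m) (hs_rel m)"

definition hs_phi :: "enat \<Rightarrow> (nat \<Rightarrow> 'k::comm_ring_1) \<Rightarrow> nat \<Rightarrow> 'k hs_poly set" where
  "hs_phi m a = (\<lambda>n. if enat n \<le> m
      then genideal (hs_poly_ring m) (hs_rel m) +>\<^bsub>hs_poly_ring m\<^esub> (\<Sum>i\<le>n. hsvar (n - i) (a i))
      else \<zero>\<^bsub>HS m\<^esub>)"

end

theory Submission
  imports Defs
begin

text \<open>Write \<open>D\<^sub>n a\<close> for the class of \<open>d\<^bsup>[n]\<^esup>a\<close> in \<open>HS\<^sup>m(k)\<close>. The defining relations say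
  that each \<open>D\<^sub>n\<close> is additive and satisfies the Leibniz rule. Hence \<open>D\<^sub>n 0 = 0\<close>, and
  \<open>D\<^sub>n 1 = 0\<close> for \<open>n > 0\<close>: expanding \<open>D\<^sub>n (1 \<cdot> 1)\<close> gives \<open>2 D\<^sub>n 1\<close> plus the terms
  \<open>D\<^sub>i 1 D\<^sub>n\<^sub>-\<^sub>i 1\<close> with \<open>0 < i < n\<close>, which vanish by induction. So \<open>\<phi>\<close> is additive and unital,
  and multiplicativity reduces to the fact that both \<open>\<phi>(ab)\<^sub>n\<close> and \<open>(\<phi>(a)\<phi>(b))\<^sub>n\<close> expand to
  the sum of \<open>D\<^sub>l(a\<^sub>j) D\<^sub>u(b\<^sub>t)\<close> over all \<open>j + l + t + u = n\<close>.\<close>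

lemma enat_le_of_le: "i \<le> n \<Longrightarrow> enat n \<le> m \<Longrightarrow> enat i \<le> m"
  by (meson enat_ord_simps(1) order_trans)

lemma enat_diff_le: "enat n \<le> m \<Longrightarrow> enat (n - i) \<le> m"
  by (rule enat_le_of_le[of _ n]) auto

lemma hs_poly_ring_simps [simp]:
  "a \<oplus>\<^bsub>hs_poly_ring m\<^esub> b = a + b" "a \<otimes>\<^bsub>hs_poly_ring m\<^esub> b = a * b"
  "\<zero>\<^bsub>hs_poly_ring m\<^esub> = 0" "\<one>\<^bsub>hs_poly_ring m\<^esub> = 1"
  by (simp_all add: hs_poly_ring_def)

lemma tcring_simps [simp]:
  "a \<oplus>\<^bsub>tcring\<^esub> b = a + b" "a \<otimes>\<^bsub>tcring\<^esub> b = a * b"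
  "\<zero>\<^bsub>tcring\<^esub> = 0" "\<one>\<^bsub>tcring\<^esub> = 1" "carrier tcring = UNIV"
  by (simp_all add: tcring_def)

lemma in_carrier_hs_poly_ring_iff:
  "p \<in> carrier (hs_poly_ring m) \<longleftrightarrow>
     (\<forall>mon \<in> Poly_Mapping.keys p. \<forall>v \<in> Poly_Mapping.keys mon. enat (snd v) \<le> m)"
  by (simp add: hs_poly_ring_def)

lemma hs_poly_zero_closed [simp]: "0 \<in> carrier (hs_poly_ring m)"
  and hs_poly_one_closed [simp]: "1 \<in> carrier (hs_poly_ring m)"
  by (simp_all add: in_carrier_hs_poly_ring_iff)

lemma hs_poly_uminus_closed:
  "p \<in> carrier (hs_poly_ring m) \<Longrightarrow> - p \<in> carrier (hs_poly_ring m)"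
  by (simp add: in_carrier_hs_poly_ring_iff)

lemma hs_poly_add_closed:
  "p \<in> carrier (hs_poly_ring m) \<Longrightarrow> q \<in> carrier (hs_poly_ring m) \<Longrightarrow>
     p + q \<in> carrier (hs_poly_ring m)"
  using keys_add[of p q] unfolding in_carrier_hs_poly_ring_iff by blast

lemma hs_poly_diff_closed:
  "p \<in> carrier (hs_poly_ring m) \<Longrightarrow> q \<in> carrier (hs_poly_ring m) \<Longrightarrow>
     p - q \<in> carrier (hs_poly_ring m)"
  using hs_poly_add_closed[of p m "- q"] hs_poly_uminus_closed[of q m] by simp

lemma hs_poly_mult_closed:
  assumes "p \<in> carrier (hs_poly_ring m)" "q \<in> carrier (hs_poly_ring m)"
  shows "p * q \<in> carrier (hs_poly_ring m)"
  unfolding in_carrier_hs_poly_ring_iff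
proof (intro ballI)
  fix mon v assume mon: "mon \<in> Poly_Mapping.keys (p * q)" and v: "v \<in> Poly_Mapping.keys mon"
  from mon keys_mult[of p q] obtain a b
    where "mon = a + b" "a \<in> Poly_Mapping.keys p" "b \<in> Poly_Mapping.keys q"
    by blast
  with v keys_add[of a b] assms show "enat (snd v) \<le> m"
    unfolding in_carrier_hs_poly_ring_iff by blast
qed

lemma hs_poly_sum_closed:
  "(\<And>i. i \<in> A \<Longrightarrow> f i \<in> carrier (hs_poly_ring m)) \<Longrightarrow> sum f A \<in> carrier (hs_poly_ring m)"
  by (induction A rule: infinite_finite_induct) (auto intro: hs_poly_add_closed)

lemma hsvar_closed: "enat n \<le> m \<Longrightarrow> hsvar n a \<in> carrier (hs_poly_ring m)"
  by (simp add: in_carrier_hs_poly_ring_iff hsvar_def)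

lemmas hs_poly_closed =
  hs_poly_uminus_closed hs_poly_add_closed hs_poly_diff_closed hs_poly_mult_closed
  hs_poly_sum_closed hsvar_closed

lemma cring_hs_poly_ring: "cring (hs_poly_ring m :: 'k hs_poly ring)"
proof (rule cringI)
  show "abelian_group (hs_poly_ring m :: 'k hs_poly ring)"
  proof (rule abelian_groupI)
    fix p :: "'k hs_poly" assume "p \<in> carrier (hs_poly_ring m)"
    then show "\<exists>q\<in>carrier (hs_poly_ring m). q \<oplus>\<^bsub>hs_poly_ring m\<^esub> p = \<zero>\<^bsub>hs_poly_ring m\<^esub>"
      by (intro bexI[of _ "- p"]) (auto intro: hs_poly_closed)
  qed (auto simp: algebra_simps intro: hs_poly_closed)
  show "comm_monoid (hs_poly_ring m :: 'k hs_poly ring)"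
    by (rule comm_monoidI) (auto simp: algebra_simps intro: hs_poly_closed)
qed (simp add: algebra_simps)

lemma cring_tcring: "cring (tcring :: 'a::comm_ring_1 ring)"
proof (rule cringI)
  show "abelian_group (tcring :: 'a ring)"
    by (rule abelian_groupI) (auto simp: algebra_simps intro: exI[of _ "- _"])
  show "comm_monoid (tcring :: 'a ring)"
    by (rule comm_monoidI) (auto simp: algebra_simps)
qed (simp add: algebra_simps)

lemma finsum_tcring: "finite A \<Longrightarrow> finsum (tcring :: 'a::comm_ring_1 ring) f A = sum f A"
proof (induction A rule: finite_induct)
  case empty
  interpret cring "tcring :: 'a ring" by (rule cring_tcring)
  show ?case by simp
next
  case (insert x F)
  interpret cring "tcring :: 'a ring" by (rule cring_tcring)
  from insert show ?case by simp
qed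

lemma finsum_hs_poly_ring:
  "finite A \<Longrightarrow> (\<And>i. i \<in> A \<Longrightarrow> f i \<in> carrier (hs_poly_ring m)) \<Longrightarrow>
     finsum (hs_poly_ring m) f A = sum f A"
proof (induction A rule: finite_induct)
  case empty
  interpret cring "hs_poly_ring m" by (rule cring_hs_poly_ring)
  show ?case by simp
next
  case (insert x F)
  interpret cring "hs_poly_ring m" by (rule cring_hs_poly_ring)
  from insert show ?case by (simp add: Pi_def)
qed

definition hs_ideal :: "enat \<Rightarrow> ('k::comm_ring_1) hs_poly set" where
  "hs_ideal m = genideal (hs_poly_ring m) (hs_rel m)"

definition hs_class :: "enat \<Rightarrow> ('k::comm_ring_1) hs_poly \<Rightarrow> 'k hs_poly set" where
  "hs_class m p = hs_ideal m +>\<^bsub>hs_poly_ring m\<^esub> p"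

lemma hs_rel_subset_carrier: "hs_rel m \<subseteq> carrier (hs_poly_ring m)"
  unfolding hs_rel_def
  by (auto intro!: hs_poly_closed intro: enat_le_of_le enat_diff_le simp: zero_enat_def[symmetric])

lemma ideal_hs_ideal: "ideal (hs_ideal m) (hs_poly_ring m)"
  unfolding hs_ideal_def
  by (rule ring.genideal_ideal[OF cring.axioms(1)[OF cring_hs_poly_ring] hs_rel_subset_carrier])

lemma ring_hom_cring_hs_class: "ring_hom_cring (hs_poly_ring m) (HS m) (hs_class m)"
  unfolding HS_def hs_class_def[abs_def] hs_ideal_def[symmetric]
  by (rule ideal.rcos_ring_hom_cring[OF ideal_hs_ideal cring_hs_poly_ring])

lemma cring_HS: "cring (HS m)"
  using ring_hom_cring.axioms(2)[OF ring_hom_cring_hs_class] .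

lemma hs_class_ring_hom: "hs_class m \<in> ring_hom (hs_poly_ring m) (HS m)"
  using ring_hom_cring.homh[OF ring_hom_cring_hs_class] .

lemmas hs_class_closed = ring_hom_closed[OF hs_class_ring_hom]
lemmas hs_class_add = ring_hom_add[OF hs_class_ring_hom, simplified]
lemmas hs_class_mult = ring_hom_mult[OF hs_class_ring_hom, simplified]
lemmas hs_class_one = ring_hom_one[OF hs_class_ring_hom, simplified]
lemmas hs_class_zero = ring_hom_cring.hom_zero[OF ring_hom_cring_hs_class, simplified]

lemma hs_class_sum:
  assumes "finite A" "\<And>i. i \<in> A \<Longrightarrow> f i \<in> carrier (hs_poly_ring m)"
  shows "hs_class m (sum f A) = (\<Oplus>\<^bsub>HS m\<^esub> i\<in>A. hs_class m (f i))"
  using assms ring_hom_cring.hom_finsum[OF ring_hom_cring_hs_class, of f A]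
  by (simp add: finsum_hs_poly_ring Pi_def comp_def)

lemma hs_class_rel:
  assumes "r \<in> hs_rel m"
  shows "hs_class m r = \<zero>\<^bsub>HS m\<^esub>"
proof -
  have "r \<in> hs_ideal m"
    using assms ring.genideal_self[OF cring.axioms(1)[OF cring_hs_poly_ring] hs_rel_subset_carrier]
    unfolding hs_ideal_def by blast
  then show ?thesis
    unfolding hs_class_def HS_def hs_ideal_def[symmetric]
    by (simp add: FactRing_def ring.a_rcos_zero[OF cring.axioms(1)[OF cring_hs_poly_ring] ideal_hs_ideal])
qed

definition hs_cong :: "enat \<Rightarrow> ('k::comm_ring_1) hs_poly \<Rightarrow> 'k hs_poly \<Rightarrow> bool" where
  "hs_cong m p q \<longleftrightarrow>
     p \<in> carrier (hs_poly_ring m) \<and> q \<in> carrier (hs_poly_ring m) \<and> hs_class m p = hs_class m q"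

lemma hs_cong_imp_class_eq: "hs_cong m p q \<Longrightarrow> hs_class m p = hs_class m q"
  by (simp add: hs_cong_def)

lemma hs_cong_refl: "p \<in> carrier (hs_poly_ring m) \<Longrightarrow> hs_cong m p p"
  by (simp add: hs_cong_def)

lemma hs_cong_sym: "hs_cong m p q \<Longrightarrow> hs_cong m q p"
  by (simp add: hs_cong_def)

lemma hs_cong_trans [trans]: "hs_cong m p q \<Longrightarrow> hs_cong m q r \<Longrightarrow> hs_cong m p r"
  by (simp add: hs_cong_def)

lemma hs_cong_add: "hs_cong m p p' \<Longrightarrow> hs_cong m q q' \<Longrightarrow> hs_cong m (p + q) (p' + q')"
  by (auto simp: hs_cong_def hs_class_add intro: hs_poly_add_closed)

lemma hs_cong_mult: "hs_cong m p p' \<Longrightarrow> hs_cong m q q' \<Longrightarrow> hs_cong m (p * q) (p' * q')"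
  by (auto simp: hs_cong_def hs_class_mult intro: hs_poly_mult_closed)

lemma hs_cong_sum: "(\<And>i. i \<in> A \<Longrightarrow> hs_cong m (f i) (g i)) \<Longrightarrow> hs_cong m (sum f A) (sum g A)"
  by (induction A rule: infinite_finite_induct) (auto intro: hs_cong_refl hs_cong_add)

lemma hs_cong_add_cancel:
  assumes "hs_cong m (p + r) (q + r)" and r: "r \<in> carrier (hs_poly_ring m)"
  shows "hs_cong m p q"
proof -
  interpret HS: cring "HS m" by (rule cring_HS)
  have p: "p \<in> carrier (hs_poly_ring m)" and q: "q \<in> carrier (hs_poly_ring m)"
    using assms hs_poly_diff_closed[of "p + r" m r] hs_poly_diff_closed[of "q + r" m r]
    by (auto simp: hs_cong_def)
  then have "hs_class m p \<oplus>\<^bsub>HS m\<^esub> hs_class m r = hs_class m q \<oplus>\<^bsub>HS m\<^esub> hs_class m r"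
    using assms by (simp add: hs_cong_def hs_class_add)
  with p q r show ?thesis by (simp add: hs_cong_def hs_class_closed)
qed

lemma hs_cong_of_rel:
  assumes "p \<in> carrier (hs_poly_ring m)" "q \<in> carrier (hs_poly_ring m)" "p - q \<in> hs_rel m"
  shows "hs_cong m p q"
proof -
  interpret HS: cring "HS m" by (rule cring_HS)
  have "hs_class m p = hs_class m (q + (p - q))" by simp
  also have "\<dots> = hs_class m q \<oplus>\<^bsub>HS m\<^esub> hs_class m (p - q)"
    using assms by (intro hs_class_add hs_poly_diff_closed)
  also have "\<dots> = hs_class m q"
    using assms by (simp add: hs_class_rel hs_class_closed)
  finally show ?thesis using assms by (simp add: hs_cong_def)
qed

lemma hsvar_add_cong:
  "enat n \<le> m \<Longrightarrow> hs_cong m (hsvar n (a + b)) (hsvar n a + hsvar n b)"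
  by (rule hs_cong_of_rel) (auto simp: hs_rel_def diff_diff_eq intro: hs_poly_closed)

lemma hsvar_mult_cong:
  assumes "enat n \<le> m"
  shows "hs_cong m (hsvar n (a * b)) (\<Sum>i\<le>n. hsvar i a * hsvar (n - i) b)"
  using assms
  by (intro hs_cong_of_rel)
     (auto simp: hs_rel_def intro!: hs_poly_closed intro: enat_le_of_le enat_diff_le)

lemma hsvar_zero_one_cong: "hs_cong m (hsvar 0 1) (1 :: ('k::comm_ring_1) hs_poly)"
  by (rule hs_cong_of_rel) (auto simp: hs_rel_def zero_enat_def[symmetric] intro: hs_poly_closed)

lemma hsvar_zero_cong:
  assumes "enat n \<le> m"
  shows "hs_cong m (hsvar n 0) (0 :: ('k::comm_ring_1) hs_poly)"
proof -
  have "hs_cong m (hsvar n (0::'k) + hsvar n 0) (0 + hsvar n 0)"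
    using hs_cong_sym[OF hsvar_add_cong[OF assms, of 0 0]] by simp
  then show ?thesis
    by (rule hs_cong_add_cancel) (rule hsvar_closed[OF assms])
qed

lemma hsvar_sum_cong:
  assumes "enat n \<le> m"
  shows "hs_cong m (hsvar n (sum a J)) (\<Sum>j\<in>J. hsvar n (a j))"
proof (induction J rule: infinite_finite_induct)
  case (insert j J)
  have "hs_cong m (hsvar n (a j + sum a J)) (hsvar n (a j) + hsvar n (sum a J))"
    using assms by (rule hsvar_add_cong)
  also have "hs_cong m \<dots> (hsvar n (a j) + (\<Sum>j\<in>J. hsvar n (a j)))"
    using assms insert.IH by (intro hs_cong_add hs_cong_refl hsvar_closed)
  finally show ?case using insert.hyps by simp
qed (use assms hsvar_zero_cong in auto)

lemma hsvar_one_cong: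
  assumes "enat n \<le> m"
  shows "hs_cong m (hsvar n 1) (if n = 0 then 1 else (0 :: ('k::comm_ring_1) hs_poly))"
  using assms
proof (induction n rule: less_induct)
  case (less n)
  show ?case
  proof (cases "n = 0")
    case True
    then show ?thesis by (simp add: hsvar_zero_one_cong)
  next
    case False
    let ?D = "hsvar n (1::'k)"
    have "hs_cong m (hsvar n (1 * 1)) (\<Sum>i\<le>n. hsvar i (1::'k) * hsvar (n - i) 1)"
      using less.prems by (rule hsvar_mult_cong)
    also have "hs_cong m \<dots> (\<Sum>i\<le>n. (if i = 0 then ?D else 0) + (if i = n then ?D else 0))"
    proof (rule hs_cong_sum)
      fix i assume "i \<in> {..n}"
      then have i: "enat i \<le> m" "enat (n - i) \<le> m"
        using less.prems by (auto intro: enat_le_of_le enat_diff_le)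
      consider "i = 0" | "i = n" | "0 < i" "i < n"
        using \<open>i \<in> {..n}\<close> by fastforce
      then show "hs_cong m (hsvar i 1 * hsvar (n - i) 1)
          ((if i = 0 then ?D else 0) + (if i = n then ?D else 0))"
      proof cases
        case 1
        then show ?thesis
          using False i hs_cong_mult[OF hsvar_zero_one_cong hs_cong_refl[OF hsvar_closed]] by simp
      next
        case 2
        then show ?thesis
          using False i hs_cong_mult[OF hs_cong_refl[OF hsvar_closed] hsvar_zero_one_cong] by simp
      next
        case 3
        then have "hs_cong m (hsvar i (1::'k)) 0"
          using i less.IH[of i] by simp
        from hs_cong_mult[OF this hs_cong_refl[OF hsvar_closed[OF i(2)]]] show ?thesis
          using 3 by simp
      qed
    qed
    also have "(\<Sum>i\<le>n. (if i = 0 then ?D else 0) + (if i = n then ?D else 0)) = 0 + ?D + ?D"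
      by (simp add: sum.distrib)
    finally have "hs_cong m (0 + ?D) (?D + ?D)"
      by (simp add: hs_cong_sym)
    then have "hs_cong m 0 ?D"
      by (rule hs_cong_add_cancel) (rule hsvar_closed[OF less.prems])
    with False show ?thesis by (simp add: hs_cong_sym)
  qed
qed

lemma sum_triangle_reindex3:
  fixes G :: "nat \<Rightarrow> nat \<Rightarrow> nat \<Rightarrow> 'a::comm_monoid_add"
  shows "(\<Sum>i\<le>n. \<Sum>j\<le>i. \<Sum>l\<le>n - i. G j l (i - j)) = (\<Sum>s\<le>n. \<Sum>j\<le>s. \<Sum>t\<le>n - s. G j (s - j) t)"
proof -
  have "(\<Sum>i\<le>n. \<Sum>j\<le>i. \<Sum>l\<le>n - i. G j l (i - j)) =
        (\<Sum>(i, j, l) \<in> (SIGMA i:{..n}. SIGMA j:{..i}. {..n - i}). G j l (i - j))"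
    by (simp add: sum.Sigma split_def)
  also have "\<dots> = (\<Sum>(s, j, t) \<in> (SIGMA s:{..n}. SIGMA j:{..s}. {..n - s}). G j (s - j) t)"
    by (rule sum.reindex_bij_witness[where i = "\<lambda>(s, j, t). (j + t, j, s - j)"
          and j = "\<lambda>(i, j, l). (j + l, j, i - j)"]) auto
  also have "\<dots> = (\<Sum>s\<le>n. \<Sum>j\<le>s. \<Sum>t\<le>n - s. G j (s - j) t)"
    by (simp add: sum.Sigma split_def)
  finally show ?thesis .
qed

definition hs_phi_poly :: "(nat \<Rightarrow> 'k::comm_ring_1) \<Rightarrow> nat \<Rightarrow> 'k hs_poly" where
  "hs_phi_poly a n = (\<Sum>i\<le>n. hsvar (n - i) (a i))"

lemma hs_phi_poly_closed: "enat n \<le> m \<Longrightarrow> hs_phi_poly a n \<in> carrier (hs_poly_ring m)"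
  unfolding hs_phi_poly_def by (intro hs_poly_sum_closed hsvar_closed enat_diff_le)

lemma hs_phi_poly_cong: "(\<And>i. i \<le> n \<Longrightarrow> a i = b i) \<Longrightarrow> hs_phi_poly a n = hs_phi_poly b n"
  unfolding hs_phi_poly_def by (intro sum.cong) auto

lemma hs_phi_eq:
  "hs_phi m a n = (if enat n \<le> m then hs_class m (hs_phi_poly a n) else \<zero>\<^bsub>HS m\<^esub>)"
  by (simp add: hs_phi_def hs_class_def hs_ideal_def hs_phi_poly_def)

lemma hs_phi_poly_add_cong:
  "enat n \<le> m \<Longrightarrow> hs_cong m (hs_phi_poly (\<lambda>i. a i + b i) n) (hs_phi_poly a n + hs_phi_poly b n)"
  unfolding hs_phi_poly_def sum.distrib[symmetric]
  by (intro hs_cong_sum hsvar_add_cong enat_diff_le)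

lemma hs_phi_poly_one_cong:
  assumes "enat n \<le> m"
  shows "hs_cong m (hs_phi_poly (\<lambda>i. if i = 0 then 1 else 0) n)
           (if n = 0 then 1 else (0 :: ('k::comm_ring_1) hs_poly))"
proof -
  have "hs_cong m (hs_phi_poly (\<lambda>i. if i = 0 then 1 else 0) n)
          (\<Sum>i\<le>n. if i = 0 then hsvar n (1::'k) else 0)"
    unfolding hs_phi_poly_def
    using assms by (intro hs_cong_sum) (auto intro: hsvar_zero_cong hs_cong_refl hsvar_closed enat_diff_le)
  also have "(\<Sum>i\<le>n. if i = 0 then hsvar n (1::'k) else 0) = hsvar n 1"
    by simp
  also have "hs_cong m \<dots> (if n = 0 then 1 else 0)"
    using assms by (rule hsvar_one_cong)
  finally show ?thesis .
qed

lemma hs_phi_poly_mult_cong: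
  assumes n: "enat n \<le> m"
  shows "hs_cong m (hs_phi_poly (\<lambda>i. \<Sum>j\<le>i. a j * b (i - j)) n)
           (\<Sum>s\<le>n. hs_phi_poly a s * hs_phi_poly b (n - s))"
proof -
  \<comment> \<open>\<open>G j l t = D\<^sub>l(a\<^sub>j) D\<^sub>u(b\<^sub>t)\<close> with \<open>j + l + t + u = n\<close>\<close>
  define G where "G j l t = hsvar l (a j) * hsvar (n - j - l - t) (b t)" for j l t
  have "hs_cong m (hs_phi_poly (\<lambda>i. \<Sum>j\<le>i. a j * b (i - j)) n)
          (\<Sum>i\<le>n. \<Sum>j\<le>i. \<Sum>l\<le>n - i. G j l (i - j))"
    unfolding hs_phi_poly_def
  proof (rule hs_cong_sum)
    fix i assume "i \<in> {..n}"
    have ni: "enat (n - i) \<le> m"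
      using n by (rule enat_diff_le)
    have "hs_cong m (hsvar (n - i) (\<Sum>j\<le>i. a j * b (i - j)))
            (\<Sum>j\<le>i. hsvar (n - i) (a j * b (i - j)))"
      using ni by (rule hsvar_sum_cong)
    also have "hs_cong m \<dots> (\<Sum>j\<le>i. \<Sum>l\<le>n - i. hsvar l (a j) * hsvar (n - i - l) (b (i - j)))"
      using ni by (intro hs_cong_sum hsvar_mult_cong)
    also have "\<dots> = (\<Sum>j\<le>i. \<Sum>l\<le>n - i. G j l (i - j))"
      by (intro sum.cong refl) (auto simp: G_def add.commute)
    finally show "hs_cong m (hsvar (n - i) (\<Sum>j\<le>i. a j * b (i - j)))
        (\<Sum>j\<le>i. \<Sum>l\<le>n - i. G j l (i - j))" .
  qed
  also have "(\<Sum>i\<le>n. \<Sum>j\<le>i. \<Sum>l\<le>n - i. G j l (i - j)) = (\<Sum>s\<le>n. \<Sum>j\<le>s. \<Sum>t\<le>n - s. G j (s - j) t)"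
    by (rule sum_triangle_reindex3)
  also have "\<dots> = (\<Sum>s\<le>n. hs_phi_poly a s * hs_phi_poly b (n - s))"
    unfolding hs_phi_poly_def sum_product
    by (intro sum.cong refl) (auto simp: G_def)
  finally show ?thesis .
qed

lemma trunc_ps_simps:
  "carrier (trunc_ps R m) =
     {f. (\<forall>n. f n \<in> carrier R) \<and> (\<forall>n. \<not> enat n \<le> m \<longrightarrow> f n = \<zero>\<^bsub>R\<^esub>)}"
  "f \<oplus>\<^bsub>trunc_ps R m\<^esub> g = (\<lambda>n. if enat n \<le> m then f n \<oplus>\<^bsub>R\<^esub> g n else \<zero>\<^bsub>R\<^esub>)"
  "f \<otimes>\<^bsub>trunc_ps R m\<^esub> g =
     (\<lambda>n. if enat n \<le> m then (\<Oplus>\<^bsub>R\<^esub> i\<in>{..n}. f i \<otimes>\<^bsub>R\<^esub> g (n - i)) else \<zero>\<^bsub>R\<^esub>)"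
  "\<one>\<^bsub>trunc_ps R m\<^esub> = (\<lambda>n. if n = 0 then \<one>\<^bsub>R\<^esub> else \<zero>\<^bsub>R\<^esub>)"
  by (simp_all add: trunc_ps_def)

lemma hs_phi_closed: "hs_phi m a \<in> carrier (trunc_ps (HS m) m)"
proof -
  interpret HS: cring "HS m" by (rule cring_HS)
  show ?thesis
    by (simp add: trunc_ps_simps hs_phi_eq hs_class_closed hs_phi_poly_closed)
qed

lemma hs_phi_add:
  "hs_phi m (a \<oplus>\<^bsub>trunc_ps tcring m\<^esub> b) = hs_phi m a \<oplus>\<^bsub>trunc_ps (HS m) m\<^esub> hs_phi m b"
proof
  fix n
  show "hs_phi m (a \<oplus>\<^bsub>trunc_ps tcring m\<^esub> b) n = (hs_phi m a \<oplus>\<^bsub>trunc_ps (HS m) m\<^esub> hs_phi m b) n"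
  proof (cases "enat n \<le> m")
    case True
    have "hs_phi_poly (a \<oplus>\<^bsub>trunc_ps tcring m\<^esub> b) n = hs_phi_poly (\<lambda>i. a i + b i) n"
      using True by (intro hs_phi_poly_cong) (auto simp: trunc_ps_simps intro: enat_le_of_le)
    with True hs_phi_poly_add_cong[OF True, of a b] show ?thesis
      by (simp add: hs_phi_eq trunc_ps_simps hs_cong_def hs_class_add hs_phi_poly_closed)
  qed (simp add: hs_phi_eq trunc_ps_simps)
qed

lemma hs_phi_mult:
  "hs_phi m (a \<otimes>\<^bsub>trunc_ps tcring m\<^esub> b) = hs_phi m a \<otimes>\<^bsub>trunc_ps (HS m) m\<^esub> hs_phi m b"
proof
  interpret HS: cring "HS m" by (rule cring_HS)
  fix n
  show "hs_phi m (a \<otimes>\<^bsub>trunc_ps tcring m\<^esub> b) n = (hs_phi m a \<otimes>\<^bsub>trunc_ps (HS m) m\<^esub> hs_phi m b) n"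
  proof (cases "enat n \<le> m")
    case True
    have le: "enat s \<le> m" "enat (n - s) \<le> m" if "s \<le> n" for s
      using that True by (auto intro: enat_le_of_le enat_diff_le)
    have "hs_phi_poly (a \<otimes>\<^bsub>trunc_ps tcring m\<^esub> b) n = hs_phi_poly (\<lambda>i. \<Sum>j\<le>i. a j * b (i - j)) n"
      using le by (intro hs_phi_poly_cong) (simp add: trunc_ps_simps finsum_tcring)
    then have "hs_phi m (a \<otimes>\<^bsub>trunc_ps tcring m\<^esub> b) n =
        hs_class m (\<Sum>s\<le>n. hs_phi_poly a s * hs_phi_poly b (n - s))"
      using True hs_phi_poly_mult_cong[OF True, of a b] by (simp add: hs_phi_eq hs_cong_def)
    also have "\<dots> = (\<Oplus>\<^bsub>HS m\<^esub> s\<in>{..n}. hs_class m (hs_phi_poly a s * hs_phi_poly b (n - s)))"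
      by (intro hs_class_sum) (auto intro!: hs_poly_mult_closed hs_phi_poly_closed le)
    also have "\<dots> = (\<Oplus>\<^bsub>HS m\<^esub> s\<in>{..n}. hs_phi m a s \<otimes>\<^bsub>HS m\<^esub> hs_phi m b (n - s))"
      using le by (intro HS.finsum_cong')
        (auto simp: hs_phi_eq hs_class_mult hs_class_closed hs_phi_poly_closed)
    finally show ?thesis
      using True by (simp add: trunc_ps_simps)
  qed (simp add: hs_phi_eq trunc_ps_simps)
qed

lemma hs_phi_one:
  "hs_phi m \<one>\<^bsub>trunc_ps (tcring :: 'k::comm_ring_1 ring) m\<^esub> = \<one>\<^bsub>trunc_ps (HS m) m\<^esub>"
proof
  fix n
  show "hs_phi m \<one>\<^bsub>trunc_ps (tcring :: 'k ring) m\<^esub> n = \<one>\<^bsub>trunc_ps (HS m) m\<^esub> n"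
  proof (cases "enat n \<le> m")
    case True
    have "hs_phi_poly \<one>\<^bsub>trunc_ps (tcring :: 'k ring) m\<^esub> n = hs_phi_poly (\<lambda>i. if i = 0 then 1 else 0) n"
      by (intro hs_phi_poly_cong) (simp add: trunc_ps_simps)
    with True have "hs_phi m \<one>\<^bsub>trunc_ps (tcring :: 'k ring) m\<^esub> n =
        hs_class m (hs_phi_poly (\<lambda>i. if i = 0 then 1 else 0) n)"
      by (simp add: hs_phi_eq)
    also have "\<dots> = hs_class m (if n = 0 then 1 else 0)"
      using True by (intro hs_cong_imp_class_eq hs_phi_poly_one_cong)
    also have "\<dots> = \<one>\<^bsub>trunc_ps (HS m) m\<^esub> n"
      by (simp add: trunc_ps_simps hs_class_one hs_class_zero)
    finally show ?thesis .
  next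
    case False
    then have "n \<noteq> 0"
      using zero_le[of m] by (metis zero_enat_def)
    with False show ?thesis
      by (simp add: hs_phi_eq trunc_ps_simps)
  qed
qed

theorem proposition6p4:
  fixes p :: nat and m :: enat
  assumes "Factorial_Ring.prime p" and "of_nat p = (0 :: 'k :: comm_ring_1)"
  shows "(hs_phi m :: (nat \<Rightarrow> 'k) \<Rightarrow> _)
           \<in> ring_hom (trunc_ps (tcring :: 'k ring) m) (trunc_ps (HS m :: 'k hs_poly set ring) m)"
  by (rule ring_hom_memI) (simp_all add: hs_phi_closed hs_phi_add hs_phi_mult hs_phi_one)

end
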